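(* Let $\mathcal{V}$ be a variety and let $e$ be a unary term in the language of $\mathcal{V}$ with $\mathcal{V}\models e(e(x))=e(x)$. (1) The class of all $\mathbf{A}\in\mathcal{V}$ for which $e$ is separating is a prevariety, i.e. it is closed under isomorphic images, subalgebras and products. (2) For $\mathbf{A},\mathbf{B}\in\mathcal{V}$ consider the map $\mathrm{Hom}(\mathbf{A},\mathbf{B})\to\mathrm{Hom}(e(\mathbf{A}),e(\mathbf{B}))$, $\varphi\mapsto\varphi|_{e(A)}$. (i) If $e$ is dense for $\mathbf{A}$, this map is injective. (ii) If $e$ is dense for $\mathbf{A}$ and separating for $\mathbf{B}$, this map is surjective.
   Context: For an algebra $\mathbf{A}$ and a unary term $e$ with $\mathbf{A}\models e(e(x))=e(x)$, the localization $e(\mathbf{A})$ is the algebra with universe $e(A)$ whose fundamental operation symbols are the symbols $et$, one for each term $t$ in the language of $\mathbf{A}$ (with the arity of $t$), where $et$ is interpreted as the restriction to $e(A)$ of the term operation $e(t(x_1,\dots,x_n))$ of $\mathbf{A}$ (under which $e(A)$ is closed). This fixes a common similarity type for all $e(\mathbf{A})$, $\mathbf{A}$ in a class satisfying $e^2=e$. For a homomorphism $\varphi:\mathbf{B}\to\mathbf{C}$, $\varphi|_{e(B)}$ is a homomorphism $e(\mathbf{B})\to e(\mathbf{C})$. The term $e$ separates $\mathbf{A}$ if for all $a\neq b$ in $A$ there is a unary term $g$ with $e(g(a))\neq e(g(b))$. The term $e$ is dense for $\mathbf{A}$ if $\mathbf{A}$ is generated as an algebra by $e(A)$. *)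

theory Defs
  imports Main "HOL-Library.FuncSet"
begin

datatype 'f trm = Var nat | Fn 'f "'f trm list"

fun wf_trm :: "('f \<Rightarrow> nat) \<Rightarrow> 'f trm \<Rightarrow> bool" where
  "wf_trm ar (Var n) = True"
| "wf_trm ar (Fn f ts) = (length ts = ar f \<and> (\<forall>t\<in>set ts. wf_trm ar t))"

fun vars :: "'f trm \<Rightarrow> nat set" where
  "vars (Var n) = {n}"
| "vars (Fn f ts) = (\<Union>t\<in>set ts. vars t)"

fun eval :: "('f \<Rightarrow> 'a list \<Rightarrow> 'a) \<Rightarrow> 'f trm \<Rightarrow> (nat \<Rightarrow> 'a) \<Rightarrow> 'a" where
  "eval I (Var n) \<rho> = \<rho> n"
| "eval I (Fn f ts) \<rho> = I f (map (\<lambda>t. eval I t \<rho>) ts)"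

record ('s, 'a) alg =
  univ :: "'a set"
  ops :: "'s \<Rightarrow> 'a list \<Rightarrow> 'a"

definition is_alg :: "'s set \<Rightarrow> ('s \<Rightarrow> nat) \<Rightarrow> ('s, 'a) alg \<Rightarrow> bool" where
  "is_alg S ar A \<longleftrightarrow> (\<forall>f\<in>S. \<forall>xs. length xs = ar f \<and> set xs \<subseteq> univ A \<longrightarrow> ops A f xs \<in> univ A)"

definition hom :: "'s set \<Rightarrow> ('s \<Rightarrow> nat) \<Rightarrow> ('s, 'a) alg \<Rightarrow> ('s, 'b) alg \<Rightarrow> ('a \<Rightarrow> 'b) \<Rightarrow> bool" where
  "hom S ar A B h \<longleftrightarrow> (\<forall>x\<in>univ A. h x \<in> univ B) \<and>
     (\<forall>f\<in>S. \<forall>xs. length xs = ar f \<and> set xs \<subseteq> univ A \<longrightarrow> h (ops A f xs) = ops B f (map h xs))"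

definition iso :: "'s set \<Rightarrow> ('s \<Rightarrow> nat) \<Rightarrow> ('s, 'a) alg \<Rightarrow> ('s, 'b) alg \<Rightarrow> ('a \<Rightarrow> 'b) \<Rightarrow> bool" where
  "iso S ar A B h \<longleftrightarrow> is_alg S ar B \<and> hom S ar A B h \<and> bij_betw h (univ A) (univ B)"

definition subalg :: "'s set \<Rightarrow> ('s \<Rightarrow> nat) \<Rightarrow> ('s, 'a) alg \<Rightarrow> ('s, 'a) alg \<Rightarrow> bool" where
  "subalg S ar B A \<longleftrightarrow> is_alg S ar B \<and> univ B \<subseteq> univ A \<and>
     (\<forall>f\<in>S. \<forall>xs. length xs = ar f \<and> set xs \<subseteq> univ B \<longrightarrow> ops B f xs = ops A f xs)"

definition prod_alg :: "'i set \<Rightarrow> ('i \<Rightarrow> ('s, 'a) alg) \<Rightarrow> ('s, 'i \<Rightarrow> 'a) alg" where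
  "prod_alg I As = \<lparr> univ = (\<Pi>\<^sub>E i\<in>I. univ (As i)),
     ops = (\<lambda>f xs. restrict (\<lambda>i. ops (As i) f (map (\<lambda>x. x i) xs)) I) \<rparr>"

definition closed_in :: "'s set \<Rightarrow> ('s \<Rightarrow> nat) \<Rightarrow> ('s, 'a) alg \<Rightarrow> 'a set \<Rightarrow> bool" where
  "closed_in S ar A Y \<longleftrightarrow> (\<forall>f\<in>S. \<forall>xs. length xs = ar f \<and> set xs \<subseteq> Y \<longrightarrow> ops A f xs \<in> Y)"

definition Sg :: "'s set \<Rightarrow> ('s \<Rightarrow> nat) \<Rightarrow> ('s, 'a) alg \<Rightarrow> 'a set \<Rightarrow> 'a set" where
  "Sg S ar A X = \<Inter>{Y. X \<subseteq> Y \<and> Y \<subseteq> univ A \<and> closed_in S ar A Y}"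

definition models :: "('f \<Rightarrow> nat) \<Rightarrow> ('f trm \<times> 'f trm) set \<Rightarrow> ('f, 'a) alg \<Rightarrow> bool" where
  "models ar E A \<longleftrightarrow> is_alg UNIV ar A \<and>
     (\<forall>(s, t)\<in>E. \<forall>\<rho>. (\<forall>n. \<rho> n \<in> univ A) \<longrightarrow> eval (ops A) s \<rho> = eval (ops A) t \<rho>)"

definition unary :: "('f \<Rightarrow> nat) \<Rightarrow> 'f trm \<Rightarrow> bool" where
  "unary ar t \<longleftrightarrow> wf_trm ar t \<and> vars t \<subseteq> {0}"

definition app1 :: "('f, 'a) alg \<Rightarrow> 'f trm \<Rightarrow> 'a \<Rightarrow> 'a" where
  "app1 A t a = eval (ops A) t (\<lambda>_. a)"

definition separates :: "('f \<Rightarrow> nat) \<Rightarrow> 'f trm \<Rightarrow> ('f, 'a) alg \<Rightarrow> bool" where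
  "separates ar e A \<longleftrightarrow> (\<forall>a\<in>univ A. \<forall>b\<in>univ A. a \<noteq> b \<longrightarrow>
     (\<exists>g. unary ar g \<and> app1 A e (app1 A g a) \<noteq> app1 A e (app1 A g b)))"

definition dense :: "('f \<Rightarrow> nat) \<Rightarrow> 'f trm \<Rightarrow> ('f, 'a) alg \<Rightarrow> bool" where
  "dense ar e A \<longleftrightarrow> univ A = Sg UNIV ar A (app1 A e ` univ A)"

text \<open>Symbols of the localized language: pairs (t, n) of a term t whose variables are among
  x_0..x_(n-1), with arity n (symbol "e t").\<close>
definition loc_syms :: "('f \<Rightarrow> nat) \<Rightarrow> ('f trm \<times> nat) set" where
  "loc_syms ar = {(t, n). wf_trm ar t \<and> vars t \<subseteq> {..<n}}"

definition loc_ar :: "'f trm \<times> nat \<Rightarrow> nat" where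
  "loc_ar = snd"

definition loc :: "'f trm \<Rightarrow> ('f, 'a) alg \<Rightarrow> ('f trm \<times> nat, 'a) alg" where
  "loc e A = \<lparr> univ = app1 A e ` univ A,
     ops = (\<lambda>(t, n) xs. app1 A e (eval (ops A) t (\<lambda>i. if i < length xs then xs ! i else undefined))) \<rparr>"

end

theory Submission
  imports Defs
begin

text \<open>
  Homomorphisms commute with unary term operations and with the evaluation of identities.
  Hence if a family of homomorphisms out of \<open>B\<close> is jointly injective and its targets
  satisfy \<open>E\<close> and are separated by \<open>e\<close>, then so is \<open>B\<close>. Inverses of isomorphisms,
  subalgebra inclusions and product projections are such families, which gives (1).

  If \<open>e\<close> is dense for \<open>A\<close>, every element of \<open>A\<close> is a value \<open>t(\<rho>)\<close> of a term at an
  assignment \<open>\<rho>\<close> into \<open>e(A)\<close>, and by interleaving variables finitely many such values can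
  be taken at one common assignment. So homomorphisms agreeing on \<open>e(A)\<close> agree on \<open>A\<close>, and a
  homomorphism \<open>\<chi>\<close> of the localizations extends by \<open>\<phi>(t(\<rho>)) = t(\<chi> \<circ> \<rho>)\<close>. This is
  well defined because \<open>e\<close> separates \<open>B\<close>: if \<open>t(\<rho>) = s(\<rho>)\<close> in \<open>A\<close> but
  \<open>t(\<chi> \<circ> \<rho>) \<noteq> s(\<chi> \<circ> \<rho>)\<close>, some unary \<open>g\<close> makes \<open>e(g(t(\<chi> \<circ> \<rho>)))\<close> and
  \<open>e(g(s(\<chi> \<circ> \<rho>)))\<close> differ, yet these are the images under \<open>\<chi>\<close> of the equal values of
  the localized operations \<open>e(g(t))\<close> and \<open>e(g(s))\<close> at \<open>\<rho>\<close>.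
\<close>

fun subst :: "(nat \<Rightarrow> 'f trm) \<Rightarrow> 'f trm \<Rightarrow> 'f trm" where
  "subst \<sigma> (Var n) = \<sigma> n"
| "subst \<sigma> (Fn f ts) = Fn f (map (subst \<sigma>) ts)"

lemma eval_cong: "\<forall>n\<in>vars t. \<rho> n = \<sigma> n \<Longrightarrow> eval I t \<rho> = eval I t \<sigma>"
  by (induction t) (auto intro!: arg_cong[where f = "I _"])

lemma eval_subst: "eval I (subst \<sigma> t) \<rho> = eval I t (\<lambda>i. eval I (\<sigma> i) \<rho>)"
  by (induction t) (auto intro!: arg_cong[where f = "I _"])

lemma eval_rename: "eval I (subst (Var \<circ> r) t) \<rho> = eval I t (\<rho> \<circ> r)"
  by (simp add: eval_subst comp_def)

lemma wf_subst: "wf_trm ar t \<Longrightarrow> (\<And>i. wf_trm ar (\<sigma> i)) \<Longrightarrow> wf_trm ar (subst \<sigma> t)"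
  by (induction t) auto

lemma wf_rename: "wf_trm ar (subst (Var \<circ> r) t) = wf_trm ar t"
  by (induction t) auto

lemma finite_vars: "finite (vars t)"
  by (induction t) auto

lemma eval_closed:
  "is_alg UNIV ar A \<Longrightarrow> wf_trm ar t \<Longrightarrow> range \<rho> \<subseteq> univ A \<Longrightarrow> eval (ops A) t \<rho> \<in> univ A"
proof (induction t)
  case (Fn f ts)
  then have "set (map (\<lambda>t. eval (ops A) t \<rho>) ts) \<subseteq> univ A" by auto
  with Fn.prems show ?case unfolding is_alg_def by auto
qed auto

lemma hom_eval:
  assumes "hom UNIV ar A B h" "is_alg UNIV ar A"
  shows "wf_trm ar t \<Longrightarrow> range \<rho> \<subseteq> univ A \<Longrightarrow> h (eval (ops A) t \<rho>) = eval (ops B) t (h \<circ> \<rho>)"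
proof (induction t)
  case (Fn f ts)
  have "set (map (\<lambda>t. eval (ops A) t \<rho>) ts) \<subseteq> univ A"
    using Fn.prems eval_closed[OF assms(2)] by auto
  then have "h (eval (ops A) (Fn f ts) \<rho>) = ops B f (map h (map (\<lambda>t. eval (ops A) t \<rho>) ts))"
    using assms(1) Fn.prems unfolding hom_def by auto
  also have "\<dots> = eval (ops B) (Fn f ts) (h \<circ> \<rho>)"
    using Fn by (auto simp: comp_def intro!: arg_cong[where f = "ops B f"])
  finally show ?case .
qed auto

lemma app1_closed: "is_alg UNIV ar A \<Longrightarrow> wf_trm ar t \<Longrightarrow> a \<in> univ A \<Longrightarrow> app1 A t a \<in> univ A"
  unfolding app1_def by (rule eval_closed) auto

lemma hom_app1:
  "hom UNIV ar A B h \<Longrightarrow> is_alg UNIV ar A \<Longrightarrow> wf_trm ar t \<Longrightarrow> a \<in> univ A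
   \<Longrightarrow> h (app1 A t a) = app1 B t (h a)"
  unfolding app1_def using hom_eval[of ar A B h t "\<lambda>_. a"] by (simp add: comp_def)

lemma models_eval_eq:
  assumes "models ar E A" "(s, t) \<in> E" "range \<rho> \<subseteq> univ A"
  shows "eval (ops A) s \<rho> = eval (ops A) t \<rho>"
  using assms unfolding models_def by fastforce

lemma Sg_least: "X \<subseteq> Y \<Longrightarrow> Y \<subseteq> univ A \<Longrightarrow> closed_in S ar A Y \<Longrightarrow> Sg S ar A X \<subseteq> Y"
  unfolding Sg_def by blast

section \<open>Transfer along jointly injective homomorphisms\<close>

lemma hom_inv_into:
  assumes A: "is_alg UNIV ar A" and h: "hom UNIV ar A B h" and bij: "bij_betw h (univ A) (univ B)"
  shows "hom UNIV ar B A (inv_into (univ A) h)"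
  unfolding hom_def
proof (intro conjI ballI allI impI)
  show "inv_into (univ A) h y \<in> univ A" if "y \<in> univ B" for y
    using that bij by (metis bij_betw_def inv_into_into)
next
  fix f ys assume ys: "length ys = ar f \<and> set ys \<subseteq> univ B"
  define xs where "xs = map (inv_into (univ A) h) ys"
  have xs: "length xs = ar f" "set xs \<subseteq> univ A" "map h xs = ys"
    using ys bij by (auto simp: xs_def bij_betw_def inv_into_into f_inv_into_f intro!: map_idI)
  have "ops B f ys = h (ops A f xs)"
    using h xs unfolding hom_def by auto
  moreover have "ops A f xs \<in> univ A"
    using A xs unfolding is_alg_def by auto
  ultimately show "inv_into (univ A) h (ops B f ys) = ops A f (map (inv_into (univ A) h) ys)"
    using bij by (simp add: bij_betw_def xs_def)
qed

lemma hom_subalg_incl: "subalg UNIV ar B A \<Longrightarrow> hom UNIV ar B A id"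
  unfolding subalg_def hom_def by auto

lemma is_alg_prod_alg:
  assumes "\<forall>i\<in>I. is_alg UNIV ar (As i)"
  shows "is_alg UNIV ar (prod_alg I As)"
  unfolding is_alg_def
proof (intro ballI allI impI)
  fix f xs assume xs: "length xs = ar f \<and> set xs \<subseteq> univ (prod_alg I As)"
  have "ops (As i) f (map (\<lambda>x. x i) xs) \<in> univ (As i)" if i: "i \<in> I" for i
  proof -
    have "set (map (\<lambda>x. x i) xs) \<subseteq> univ (As i)"
      using xs i by (auto simp: prod_alg_def)
    then show ?thesis
      using assms i xs unfolding is_alg_def by auto
  qed
  then show "ops (prod_alg I As) f xs \<in> univ (prod_alg I As)"
    by (simp add: prod_alg_def)
qed

lemma hom_proj: "i \<in> I \<Longrightarrow> hom UNIV ar (prod_alg I As) (As i) (\<lambda>x. x i)"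
  unfolding hom_def prod_alg_def by auto

lemma models_if_jointly_injective_homs:
  assumes E_wf: "\<forall>(s, t)\<in>E. wf_trm ar s \<and> wf_trm ar t" and B: "is_alg UNIV ar B"
    and homs: "\<forall>i\<in>I. models ar E (As i) \<and> hom UNIV ar B (As i) (k i)"
    and inj: "\<forall>x\<in>univ B. \<forall>y\<in>univ B. (\<forall>i\<in>I. k i x = k i y) \<longrightarrow> x = y"
  shows "models ar E B"
  unfolding models_def
proof (intro conjI B ballI allI impI, clarify)
  fix s t and \<rho> :: "nat \<Rightarrow> _" assume st: "(s, t) \<in> E" and \<rho>: "\<forall>n. \<rho> n \<in> univ B"
  have wf: "wf_trm ar s" "wf_trm ar t" using E_wf st by auto
  have \<rho>B: "range \<rho> \<subseteq> univ B" using \<rho> by auto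
  have "k i (eval (ops B) s \<rho>) = k i (eval (ops B) t \<rho>)" if i: "i \<in> I" for i
  proof -
    have hom: "hom UNIV ar B (As i) (k i)" and mod: "models ar E (As i)" using homs i by auto
    have "range (k i \<circ> \<rho>) \<subseteq> univ (As i)"
      using hom \<rho> unfolding hom_def by auto
    then show ?thesis
      using models_eval_eq[OF mod st] hom_eval[OF hom B _ \<rho>B] wf by simp
  qed
  moreover have "eval (ops B) s \<rho> \<in> univ B" "eval (ops B) t \<rho> \<in> univ B"
    using eval_closed[OF B _ \<rho>B] wf by auto
  ultimately show "eval (ops B) s \<rho> = eval (ops B) t \<rho>"
    using inj by blast
qed

lemma separates_if_jointly_injective_homs:
  assumes e: "unary ar e" and B: "is_alg UNIV ar B"
    and homs: "\<forall>i\<in>I. separates ar e (As i) \<and> hom UNIV ar B (As i) (k i)"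
    and inj: "\<forall>x\<in>univ B. \<forall>y\<in>univ B. (\<forall>i\<in>I. k i x = k i y) \<longrightarrow> x = y"
  shows "separates ar e B"
  unfolding separates_def
proof (intro ballI impI)
  fix a b assume a: "a \<in> univ B" and b: "b \<in> univ B" and "a \<noteq> b"
  then obtain i where i: "i \<in> I" and "k i a \<noteq> k i b"
    using inj by blast
  moreover have "k i a \<in> univ (As i)" "k i b \<in> univ (As i)"
    using homs i a b unfolding hom_def by auto
  ultimately obtain g where g: "unary ar g"
    and "app1 (As i) e (app1 (As i) g (k i a)) \<noteq> app1 (As i) e (app1 (As i) g (k i b))"
    using homs unfolding separates_def by blast
  moreover have "k i (app1 B e (app1 B g x)) = app1 (As i) e (app1 (As i) g (k i x))"
    if "x \<in> univ B" for x
  proof -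
    have hom: "hom UNIV ar B (As i) (k i)" using homs i by blast
    have wf: "wf_trm ar e" "wf_trm ar g" using e g unfolding unary_def by auto
    show ?thesis
      using hom_app1[OF hom B wf(1) app1_closed[OF B wf(2) that]] hom_app1[OF hom B wf(2) that]
      by simp
  qed
  ultimately show "\<exists>g. unary ar g \<and> app1 B e (app1 B g a) \<noteq> app1 B e (app1 B g b)"
    using a b by metis
qed

lemma separated_model_iso:
  assumes E_wf: "\<forall>(s, t)\<in>E. wf_trm ar s \<and> wf_trm ar t" and e: "unary ar e"
    and A: "models ar E A" "separates ar e A" and h: "iso UNIV ar A B h"
  shows "models ar E B \<and> separates ar e B"
proof -
  let ?k = "\<lambda>_::unit. inv_into (univ A) h"
  have B: "is_alg UNIV ar B" and bij: "bij_betw h (univ A) (univ B)"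
    using h unfolding iso_def by auto
  have "hom UNIV ar B A (inv_into (univ A) h)"
    using hom_inv_into A(1) h unfolding iso_def models_def by blast
  with A have homs: "\<forall>i\<in>UNIV. models ar E A \<and> hom UNIV ar B A (?k i)"
    "\<forall>i\<in>UNIV. separates ar e A \<and> hom UNIV ar B A (?k i)" by auto
  have "inj_on (inv_into (univ A) h) (univ B)"
    using bij by (simp add: bij_betw_def inj_on_inv_into)
  then have inj: "\<forall>x\<in>univ B. \<forall>y\<in>univ B. (\<forall>i\<in>UNIV. ?k i x = ?k i y) \<longrightarrow> x = y"
    unfolding inj_on_def by blast
  show ?thesis
    using models_if_jointly_injective_homs[OF E_wf B homs(1) inj]
      separates_if_jointly_injective_homs[OF e B homs(2) inj] by blast
qed

lemma separated_model_subalg: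
  assumes E_wf: "\<forall>(s, t)\<in>E. wf_trm ar s \<and> wf_trm ar t" and e: "unary ar e"
    and A: "models ar E A" "separates ar e A" and B: "subalg UNIV ar B A"
  shows "models ar E B \<and> separates ar e B"
proof -
  let ?k = "\<lambda>_::unit. id"
  have B_alg: "is_alg UNIV ar B" using B unfolding subalg_def by blast
  have homs: "\<forall>i\<in>UNIV. models ar E A \<and> hom UNIV ar B A (?k i)"
    "\<forall>i\<in>UNIV. separates ar e A \<and> hom UNIV ar B A (?k i)"
    using A hom_subalg_incl[OF B] by auto
  have inj: "\<forall>x\<in>univ B. \<forall>y\<in>univ B. (\<forall>i\<in>UNIV. ?k i x = ?k i y) \<longrightarrow> x = y"
    by simp
  show ?thesis
    using models_if_jointly_injective_homs[OF E_wf B_alg homs(1) inj]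
      separates_if_jointly_injective_homs[OF e B_alg homs(2) inj] by blast
qed

lemma separated_model_prod:
  assumes E_wf: "\<forall>(s, t)\<in>E. wf_trm ar s \<and> wf_trm ar t" and e: "unary ar e"
    and As: "\<forall>i\<in>I. models ar E (As i) \<and> separates ar e (As i)"
  shows "models ar E (prod_alg I As) \<and> separates ar e (prod_alg I As)"
proof -
  let ?k = "\<lambda>i x. x i"
  have P: "is_alg UNIV ar (prod_alg I As)"
    by (rule is_alg_prod_alg) (use As in \<open>simp add: models_def\<close>)
  have homs: "\<forall>i\<in>I. models ar E (As i) \<and> hom UNIV ar (prod_alg I As) (As i) (?k i)"
    "\<forall>i\<in>I. separates ar e (As i) \<and> hom UNIV ar (prod_alg I As) (As i) (?k i)"
    using As by (simp_all add: hom_proj)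
  have inj: "\<forall>x\<in>univ (prod_alg I As). \<forall>y\<in>univ (prod_alg I As). (\<forall>i\<in>I. ?k i x = ?k i y) \<longrightarrow> x = y"
  proof (intro ballI impI)
    fix x y assume "x \<in> univ (prod_alg I As)" "y \<in> univ (prod_alg I As)" "\<forall>i\<in>I. x i = y i"
    then show "x = y"
      by (intro PiE_ext[of x I "\<lambda>i. univ (As i)" y]) (auto simp: prod_alg_def)
  qed
  show ?thesis
    using models_if_jointly_injective_homs[OF E_wf P homs(1) inj]
      separates_if_jointly_injective_homs[OF e P homs(2) inj] by blast
qed

section \<open>Dense localizations\<close>

lemma univ_loc: "univ (loc e A) = app1 A e ` univ A"
  by (simp add: loc_def)

lemma univ_loc_subset: "is_alg UNIV ar A \<Longrightarrow> wf_trm ar e \<Longrightarrow> univ (loc e A) \<subseteq> univ A"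
  by (auto simp: univ_loc intro: app1_closed)

lemma hom_eq_on_Sg:
  assumes A: "is_alg UNIV ar A" and \<phi>: "hom UNIV ar A B \<phi>" and \<psi>: "hom UNIV ar A B \<psi>"
    and X: "X \<subseteq> univ A" and eq: "\<forall>x\<in>X. \<phi> x = \<psi> x"
  shows "\<forall>x\<in>Sg UNIV ar A X. \<phi> x = \<psi> x"
proof -
  have "closed_in UNIV ar A {x\<in>univ A. \<phi> x = \<psi> x}"
    unfolding closed_in_def
  proof (intro ballI allI impI)
    fix f xs assume xs: "length xs = ar f \<and> set xs \<subseteq> {x\<in>univ A. \<phi> x = \<psi> x}"
    then have "length xs = ar f \<and> set xs \<subseteq> univ A" by auto
    then have "\<phi> (ops A f xs) = ops B f (map \<phi> xs)" "\<psi> (ops A f xs) = ops B f (map \<psi> xs)"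
      using \<phi> \<psi> unfolding hom_def by auto
    moreover have "map \<phi> xs = map \<psi> xs" "ops A f xs \<in> univ A"
      using xs A unfolding is_alg_def by auto
    ultimately show "ops A f xs \<in> {x\<in>univ A. \<phi> x = \<psi> x}" by simp
  qed
  with X eq have "Sg UNIV ar A X \<subseteq> {x\<in>univ A. \<phi> x = \<psi> x}"
    by (intro Sg_least) auto
  then show ?thesis by blast
qed

lemma hom_eq_if_eq_on_loc:
  assumes A: "is_alg UNIV ar A" and e: "wf_trm ar e" and dense: "dense ar e A"
    and \<phi>: "hom UNIV ar A B \<phi>" and \<psi>: "hom UNIV ar A B \<psi>"
    and eq: "\<forall>x\<in>univ (loc e A). \<phi> x = \<psi> x"
  shows "\<forall>x\<in>univ A. \<phi> x = \<psi> x"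
  using hom_eq_on_Sg[OF A \<phi> \<psi> univ_loc_subset[OF A e] eq] dense
  unfolding dense_def univ_loc by simp

definition term_values :: "('f \<Rightarrow> nat) \<Rightarrow> ('f, 'a) alg \<Rightarrow> 'a set \<Rightarrow> 'a set" where
  "term_values ar A X = {eval (ops A) t \<rho> | t \<rho>. wf_trm ar t \<and> range \<rho> \<subseteq> X}"

lemma term_valuesI: "wf_trm ar t \<Longrightarrow> range \<rho> \<subseteq> X \<Longrightarrow> eval (ops A) t \<rho> \<in> term_values ar A X"
  unfolding term_values_def by auto

lemma term_valuesE:
  assumes "a \<in> term_values ar A X"
  obtains t \<rho> where "wf_trm ar t" "range \<rho> \<subseteq> X" "a = eval (ops A) t \<rho>"
  using assms unfolding term_values_def by auto

text \<open>Renaming the variables of one term to even and of another to odd indices lets both be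
  evaluated at the single assignment \<open>interleave \<rho> \<sigma>\<close>.\<close>

definition interleave :: "(nat \<Rightarrow> 'a) \<Rightarrow> (nat \<Rightarrow> 'a) \<Rightarrow> nat \<Rightarrow> 'a" where
  "interleave \<rho> \<sigma> n = (if even n then \<rho> (n div 2) else \<sigma> (n div 2))"

lemma interleave_comp_double: "interleave \<rho> \<sigma> \<circ> (\<lambda>i. 2 * i) = \<rho>"
  by (rule ext) (simp add: interleave_def)

lemma interleave_comp_Suc_double: "interleave \<rho> \<sigma> \<circ> (\<lambda>i. Suc (2 * i)) = \<sigma>"
  by (rule ext) (simp add: interleave_def)

lemma range_interleave: "range (interleave \<rho> \<sigma>) \<subseteq> range \<rho> \<union> range \<sigma>"
  by (auto simp: interleave_def)

lemma term_values_common_assignment: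
  assumes "set xs \<subseteq> term_values ar A X" and "X \<noteq> {}"
  shows "\<exists>ts \<rho>. (\<forall>t\<in>set ts. wf_trm ar t) \<and> range \<rho> \<subseteq> X \<and> xs = map (\<lambda>t. eval (ops A) t \<rho>) ts"
  using assms(1)
proof (induction xs)
  case Nil
  from \<open>X \<noteq> {}\<close> obtain x where "x \<in> X" by blast
  then show ?case by (intro exI[of _ "[]"] exI[of _ "\<lambda>_. x"]) auto
next
  case (Cons x xs)
  have "set xs \<subseteq> term_values ar A X" using Cons.prems by simp
  then obtain ts \<rho> where ts: "\<forall>t\<in>set ts. wf_trm ar t" "range \<rho> \<subseteq> X"
    "xs = map (\<lambda>t. eval (ops A) t \<rho>) ts" using Cons.IH by blast
  from Cons.prems obtain t \<sigma> where t: "wf_trm ar t" "range \<sigma> \<subseteq> X" "x = eval (ops A) t \<sigma>"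
    by (auto elim: term_valuesE)
  let ?ts = "subst (Var \<circ> (\<lambda>i. 2 * i)) t # map (subst (Var \<circ> (\<lambda>i. Suc (2 * i)))) ts"
  have "eval (ops A) (subst (Var \<circ> (\<lambda>i. 2 * i)) t) (interleave \<sigma> \<rho>) = x"
    using t(3) by (simp add: eval_rename interleave_comp_double)
  moreover have "map (\<lambda>t. eval (ops A) t (interleave \<sigma> \<rho>)) (map (subst (Var \<circ> (\<lambda>i. Suc (2 * i)))) ts) = xs"
    using ts(3) by (simp add: eval_rename interleave_comp_Suc_double)
  ultimately have eq: "x # xs = map (\<lambda>t. eval (ops A) t (interleave \<sigma> \<rho>)) ?ts"
    by (simp only: list.map)
  have range: "range (interleave \<sigma> \<rho>) \<subseteq> X"
    using range_interleave[of \<sigma> \<rho>] ts(2) t(2) by blast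
  have wf: "\<forall>t\<in>set ?ts. wf_trm ar t"
    using ts(1) t(1) by (simp add: wf_rename)
  from wf range eq show ?case by (intro exI conjI)
qed

lemma Sg_subset_term_values:
  assumes A: "is_alg UNIV ar A" and X: "X \<subseteq> univ A" "X \<noteq> {}"
  shows "Sg UNIV ar A X \<subseteq> term_values ar A X"
proof (rule Sg_least)
  show "X \<subseteq> term_values ar A X"
  proof
    fix x assume "x \<in> X"
    then show "x \<in> term_values ar A X"
      using term_valuesI[of ar "Var 0" "\<lambda>_. x" X A] by simp
  qed
  show "term_values ar A X \<subseteq> univ A"
    using eval_closed[OF A] X by (auto elim: term_valuesE)
  show "closed_in UNIV ar A (term_values ar A X)"
    unfolding closed_in_def
  proof (intro ballI allI impI)
    fix f xs assume xs: "length xs = ar f \<and> set xs \<subseteq> term_values ar A X"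
    then obtain ts \<rho> where ts: "\<forall>t\<in>set ts. wf_trm ar t" "range \<rho> \<subseteq> X"
      "xs = map (\<lambda>t. eval (ops A) t \<rho>) ts"
      using term_values_common_assignment X(2) by blast
    then have wf: "wf_trm ar (Fn f ts)" and eq: "ops A f xs = eval (ops A) (Fn f ts) \<rho>"
      using xs by auto
    show "ops A f xs \<in> term_values ar A X"
      unfolding eq using wf ts(2) by (rule term_valuesI)
  qed
qed

lemma hom_if_commutes_with_eval:
  assumes B: "is_alg UNIV ar B" and gen: "univ A \<subseteq> term_values ar A X" and X: "X \<noteq> {}"
    and \<chi>: "\<chi> ` X \<subseteq> univ B"
    and \<phi>: "\<And>t \<rho>. wf_trm ar t \<Longrightarrow> range \<rho> \<subseteq> X \<Longrightarrow> \<phi> (eval (ops A) t \<rho>) = eval (ops B) t (\<chi> \<circ> \<rho>)"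
  shows "hom UNIV ar A B \<phi>"
  unfolding hom_def
proof (intro conjI ballI allI impI)
  fix a assume "a \<in> univ A"
  with gen have "a \<in> term_values ar A X" by blast
  then obtain t \<rho> where t: "wf_trm ar t" and \<rho>: "range \<rho> \<subseteq> X" and "a = eval (ops A) t \<rho>"
    by (rule term_valuesE)
  moreover have "range (\<chi> \<circ> \<rho>) \<subseteq> univ B"
    using \<chi> \<rho> by auto
  ultimately show "\<phi> a \<in> univ B"
    using \<phi> eval_closed[OF B t] by simp
next
  fix f xs assume xs: "length xs = ar f \<and> set xs \<subseteq> univ A"
  with gen have "set xs \<subseteq> term_values ar A X" by blast
  then obtain ts \<rho> where ts: "\<forall>t\<in>set ts. wf_trm ar t" "range \<rho> \<subseteq> X"
    and xs_eq: "xs = map (\<lambda>t. eval (ops A) t \<rho>) ts"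
    using term_values_common_assignment[OF _ X] by blast
  have wf: "wf_trm ar (Fn f ts)"
    using xs ts(1) xs_eq by simp
  have map_\<phi>: "map \<phi> xs = map (\<lambda>t. eval (ops B) t (\<chi> \<circ> \<rho>)) ts"
    unfolding xs_eq using \<phi> ts by simp
  have "\<phi> (ops A f xs) = \<phi> (eval (ops A) (Fn f ts) \<rho>)"
    by (simp add: xs_eq)
  also have "\<dots> = eval (ops B) (Fn f ts) (\<chi> \<circ> \<rho>)"
    using \<phi> wf ts(2) by blast
  also have "\<dots> = ops B f (map \<phi> xs)"
    using map_\<phi> by simp
  finally show "\<phi> (ops A f xs) = ops B f (map \<phi> xs)" .
qed

lemma loc_hom_image:
  "hom S ar' (loc e A) (loc e B) \<chi> \<Longrightarrow> is_alg UNIV ar B \<Longrightarrow> wf_trm ar e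
   \<Longrightarrow> \<chi> ` univ (loc e A) \<subseteq> univ B"
  using univ_loc_subset[of ar B e] unfolding hom_def by auto

lemma loc_hom_eval:
  assumes \<chi>: "hom (loc_syms ar) loc_ar (loc e A) (loc e B) \<chi>" and u: "wf_trm ar u"
    and \<rho>: "range \<rho> \<subseteq> univ (loc e A)"
  shows "\<chi> (app1 A e (eval (ops A) u \<rho>)) = app1 B e (eval (ops B) u (\<chi> \<circ> \<rho>))"
proof -
  obtain N where N: "\<forall>n\<in>vars u. n < N"
    using finite_vars finite_nat_set_iff_bounded by blast
  \<comment> \<open>\<open>(u, N)\<close> is the localized symbol \<open>e u\<close> for every \<open>N\<close> bounding the variables of \<open>u\<close>\<close>
  let ?xs = "map \<rho> [0..<N]"
  have "(u, N) \<in> loc_syms ar" "length ?xs = loc_ar (u, N)" "set ?xs \<subseteq> univ (loc e A)"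
    using u N \<rho> by (auto simp: loc_syms_def loc_ar_def)
  then have "\<chi> (ops (loc e A) (u, N) ?xs) = ops (loc e B) (u, N) (map \<chi> ?xs)"
    using \<chi> unfolding hom_def by blast
  moreover have "ops (loc e A) (u, N) ?xs = app1 A e (eval (ops A) u \<rho>)"
    using N by (auto simp: loc_def intro!: arg_cong[where f = "app1 A e"] eval_cong)
  moreover have "ops (loc e B) (u, N) (map \<chi> ?xs) = app1 B e (eval (ops B) u (\<chi> \<circ> \<rho>))"
    using N by (auto simp: loc_def intro!: arg_cong[where f = "app1 B e"] eval_cong)
  ultimately show ?thesis by simp
qed

lemma loc_hom_preserves_eval_eq:
  assumes B: "is_alg UNIV ar B" and e: "wf_trm ar e" and sep: "separates ar e B"
    and \<chi>: "hom (loc_syms ar) loc_ar (loc e A) (loc e B) \<chi>" and \<rho>: "range \<rho> \<subseteq> univ (loc e A)"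
    and wf: "wf_trm ar t" "wf_trm ar s" and eq: "eval (ops A) t \<rho> = eval (ops A) s \<rho>"
  shows "eval (ops B) t (\<chi> \<circ> \<rho>) = eval (ops B) s (\<chi> \<circ> \<rho>)"
proof (rule ccontr)
  assume neq: "eval (ops B) t (\<chi> \<circ> \<rho>) \<noteq> eval (ops B) s (\<chi> \<circ> \<rho>)"
  have "range (\<chi> \<circ> \<rho>) \<subseteq> univ B"
    using loc_hom_image[OF \<chi> B e] \<rho> by auto
  then have "eval (ops B) t (\<chi> \<circ> \<rho>) \<in> univ B" "eval (ops B) s (\<chi> \<circ> \<rho>) \<in> univ B"
    using eval_closed[OF B] wf by auto
  with neq obtain g where g: "unary ar g" and
    ne: "app1 B e (app1 B g (eval (ops B) t (\<chi> \<circ> \<rho>))) \<noteq> app1 B e (app1 B g (eval (ops B) s (\<chi> \<circ> \<rho>)))"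
    using sep unfolding separates_def by blast
  have "app1 B e (app1 B g (eval (ops B) u (\<chi> \<circ> \<rho>))) = \<chi> (app1 A e (app1 A g (eval (ops A) u \<rho>)))"
    if "wf_trm ar u" for u
  proof -
    have "wf_trm ar (subst (\<lambda>_. u) g)"
      using g that unfolding unary_def by (simp add: wf_subst)
    from loc_hom_eval[OF \<chi> this \<rho>] show ?thesis
      by (simp add: app1_def eval_subst)
  qed
  with ne eq wf show False by metis
qed

lemma loc_hom_preserves_eval_eq2:
  assumes B: "is_alg UNIV ar B" and e: "wf_trm ar e" and sep: "separates ar e B"
    and \<chi>: "hom (loc_syms ar) loc_ar (loc e A) (loc e B) \<chi>"
    and \<rho>: "range \<rho> \<subseteq> univ (loc e A)" and \<sigma>: "range \<sigma> \<subseteq> univ (loc e A)"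
    and wf: "wf_trm ar t" "wf_trm ar s" and eq: "eval (ops A) t \<rho> = eval (ops A) s \<sigma>"
  shows "eval (ops B) t (\<chi> \<circ> \<rho>) = eval (ops B) s (\<chi> \<circ> \<sigma>)"
proof -
  let ?t = "subst (Var \<circ> (\<lambda>i. 2 * i)) t" and ?s = "subst (Var \<circ> (\<lambda>i. Suc (2 * i))) s"
  have "range (interleave \<rho> \<sigma>) \<subseteq> univ (loc e A)"
    using range_interleave[of \<rho> \<sigma>] \<rho> \<sigma> by blast
  moreover have "eval (ops A) ?t (interleave \<rho> \<sigma>) = eval (ops A) ?s (interleave \<rho> \<sigma>)"
    using eq by (simp add: eval_rename interleave_comp_double interleave_comp_Suc_double)
  ultimately have "eval (ops B) ?t (\<chi> \<circ> interleave \<rho> \<sigma>) = eval (ops B) ?s (\<chi> \<circ> interleave \<rho> \<sigma>)"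
    using loc_hom_preserves_eval_eq[OF B e sep \<chi>] wf by (simp add: wf_rename)
  then show ?thesis
    by (simp add: eval_rename comp_assoc interleave_comp_double interleave_comp_Suc_double)
qed

lemma hom_from_empty: "is_alg UNIV ar A \<Longrightarrow> univ A = {} \<Longrightarrow> hom UNIV ar A B h"
  unfolding is_alg_def hom_def by (metis empty_iff set_empty2 subset_empty)

lemma loc_hom_extends:
  assumes A: "is_alg UNIV ar A" and B: "is_alg UNIV ar B" and e: "wf_trm ar e"
    and dense: "dense ar e A" and sep: "separates ar e B"
    and \<chi>: "hom (loc_syms ar) loc_ar (loc e A) (loc e B) \<chi>"
  shows "\<exists>\<phi>. hom UNIV ar A B \<phi> \<and> (\<forall>x\<in>univ (loc e A). \<phi> x = \<chi> x)"
proof (cases "univ A = {}")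
  case True
  then show ?thesis using hom_from_empty[OF A] by blast
next
  case False
  let ?X = "univ (loc e A)"
  have X: "?X \<subseteq> univ A" "?X \<noteq> {}"
    using univ_loc_subset[OF A e] False by (auto simp: univ_loc)
  have A_term_values: "univ A \<subseteq> term_values ar A ?X"
    using dense Sg_subset_term_values[OF A X] by (simp add: dense_def univ_loc)
  define \<phi> where "\<phi> a = (SOME b. \<exists>t \<rho>. wf_trm ar t \<and> range \<rho> \<subseteq> ?X \<and>
    a = eval (ops A) t \<rho> \<and> b = eval (ops B) t (\<chi> \<circ> \<rho>))" for a
  have \<phi>_eval: "\<phi> (eval (ops A) t \<rho>) = eval (ops B) t (\<chi> \<circ> \<rho>)"
    if t: "wf_trm ar t" and \<rho>: "range \<rho> \<subseteq> ?X" for t \<rho>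
    unfolding \<phi>_def
    by (rule someI2_ex) (use t \<rho> loc_hom_preserves_eval_eq2[OF B e sep \<chi>] in metis)+
  have "hom UNIV ar A B \<phi>"
    using hom_if_commutes_with_eval[OF B A_term_values X(2) loc_hom_image[OF \<chi> B e]] \<phi>_eval
    by blast
  moreover have "\<phi> x = \<chi> x" if "x \<in> ?X" for x
    using \<phi>_eval[of "Var 0" "\<lambda>_. x"] that by simp
  ultimately show ?thesis by blast
qed

theorem lemma2p2:
  fixes ar :: "'f \<Rightarrow> nat"
    and E :: "('f trm \<times> 'f trm) set"
    and e :: "'f trm"
  assumes E_wf: "\<forall>(s, t)\<in>E. wf_trm ar s \<and> wf_trm ar t"
    and e_unary: "unary ar e"
    and idem_a: "\<And>A :: ('f, 'a) alg. models ar E A \<Longrightarrow>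
                   \<forall>x\<in>univ A. app1 A e (app1 A e x) = app1 A e x"
    and idem_b: "\<And>B :: ('f, 'b) alg. models ar E B \<Longrightarrow>
                   \<forall>x\<in>univ B. app1 B e (app1 B e x) = app1 B e x"
  shows
    \<comment> \<open>(1) the class of separated members of the variety is closed under I, S, P\<close>
    "(\<forall>(A :: ('f, 'a) alg) (B :: ('f, 'b) alg) h.
        models ar E A \<and> separates ar e A \<and> iso UNIV ar A B h
        \<longrightarrow> models ar E B \<and> separates ar e B)
   \<and> (\<forall>(A :: ('f, 'a) alg) B.
        models ar E A \<and> separates ar e A \<and> subalg UNIV ar B A
        \<longrightarrow> models ar E B \<and> separates ar e B)
   \<and> (\<forall>(I :: 'i set) (As :: 'i \<Rightarrow> ('f, 'a) alg).
        (\<forall>i\<in>I. models ar E (As i) \<and> separates ar e (As i))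
        \<longrightarrow> models ar E (prod_alg I As) \<and> separates ar e (prod_alg I As))
   \<and> \<comment> \<open>(2)(i) restriction to e(A) is injective on Hom(A,B) if e is dense for A\<close>
     (\<forall>(A :: ('f, 'a) alg) (B :: ('f, 'b) alg).
        models ar E A \<and> models ar E B \<and> dense ar e A \<longrightarrow>
        (\<forall>\<phi> \<psi>. hom UNIV ar A B \<phi> \<and> hom UNIV ar A B \<psi> \<and> (\<forall>x\<in>univ (loc e A). \<phi> x = \<psi> x)
               \<longrightarrow> (\<forall>x\<in>univ A. \<phi> x = \<psi> x)))
   \<and> \<comment> \<open>(2)(ii) surjective onto Hom(e(A),e(B)) if moreover e separates B\<close>
     (\<forall>(A :: ('f, 'a) alg) (B :: ('f, 'b) alg).
        models ar E A \<and> models ar E B \<and> dense ar e A \<and> separates ar e B \<longrightarrow>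
        (\<forall>\<chi>. hom (loc_syms ar) loc_ar (loc e A) (loc e B) \<chi>
              \<longrightarrow> (\<exists>\<phi>. hom UNIV ar A B \<phi> \<and> (\<forall>x\<in>univ (loc e A). \<phi> x = \<chi> x))))"
proof (intro conjI; intro allI impI)
  have e: "wf_trm ar e" using e_unary unfolding unary_def by blast
  show "models ar E B \<and> separates ar e B"
    if "models ar E A \<and> separates ar e A \<and> iso UNIV ar A B h"
    for A :: "('f, 'a) alg" and B :: "('f, 'b) alg" and h
    by (rule separated_model_iso[OF E_wf e_unary]) (use that in blast)+
  show "models ar E B \<and> separates ar e B"
    if "models ar E A \<and> separates ar e A \<and> subalg UNIV ar B A" for A B :: "('f, 'a) alg"
    by (rule separated_model_subalg[OF E_wf e_unary]) (use that in blast)+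
  show "models ar E (prod_alg I As) \<and> separates ar e (prod_alg I As)"
    if "\<forall>i\<in>I. models ar E (As i) \<and> separates ar e (As i)" for I :: "'i set" and As
    by (rule separated_model_prod[OF E_wf e_unary]) (use that in blast)
  show "\<forall>x\<in>univ A. \<phi> x = \<psi> x"
    if "models ar E A \<and> models ar E B \<and> dense ar e A"
      and "hom UNIV ar A B \<phi> \<and> hom UNIV ar A B \<psi> \<and> (\<forall>x\<in>univ (loc e A). \<phi> x = \<psi> x)"
    for A :: "('f, 'a) alg" and B :: "('f, 'b) alg" and \<phi> \<psi>
    by (rule hom_eq_if_eq_on_loc[OF _ e]) (use that in \<open>auto simp: models_def\<close>)
  show "\<exists>\<phi>. hom UNIV ar A B \<phi> \<and> (\<forall>x\<in>univ (loc e A). \<phi> x = \<chi> x)"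
    if "models ar E A \<and> models ar E B \<and> dense ar e A \<and> separates ar e B"
      and "hom (loc_syms ar) loc_ar (loc e A) (loc e B) \<chi>"
    for A :: "('f, 'a) alg" and B :: "('f, 'b) alg" and \<chi>
    by (rule loc_hom_extends[OF _ _ e]) (use that in \<open>auto simp: models_def\<close>)
qed

end
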